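(* Let $P$ be a poset with least element $0$. Then the strong metric dimension $\mathrm{sdim}_M(G(P))$ is finite if and only if $G(P)$ is a finite graph.
   Context: For a poset $P$ with $0$ and $A\subseteq P$, $A^{\ell}=\{b\in P: b\le a \text{ for all } a\in A\}$. $Z^*(P)$ is the set of nonzero $a\in P$ for which some nonzero $b$ satisfies $\{a,b\}^{\ell}=\{0\}$. The zero-divisor graph $G(P)$ has vertex set $Z^*(P)$, distinct $a,b$ adjacent iff $\{a,b\}^{\ell}=\{0\}$. In a connected graph $G$, a vertex $w$ strongly resolves vertices $u,v$ if some shortest $u$–$w$ path contains $v$ or some shortest $v$–$w$ path contains $u$. A set $W\subseteq V(G)$ is a strong resolving set if every pair of vertices is strongly resolved by some vertex of $W$; $\mathrm{sdim}_M(G)$ is the minimum cardinality of a strong resolving set. *)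

theory Defs
  imports Main "HOL-Library.Extended_Nat"
begin

text \<open>Posets with least element 0 are modelled as types of class order_bot; 0 is bot.\<close>

definition lowerset :: "'a::order_bot set \<Rightarrow> 'a set" where
  "lowerset A = {b. \<forall>a\<in>A. b \<le> a}"

definition Zstar :: "'a::order_bot set" where
  "Zstar = {a. a \<noteq> bot \<and> (\<exists>b. b \<noteq> bot \<and> lowerset {a, b} = {bot})}"

definition zadj :: "'a::order_bot \<Rightarrow> 'a \<Rightarrow> bool" where
  "zadj a b \<longleftrightarrow> a \<in> Zstar \<and> b \<in> Zstar \<and> a \<noteq> b \<and> lowerset {a, b} = {bot}"

definition walk :: "'v set \<Rightarrow> ('v \<Rightarrow> 'v \<Rightarrow> bool) \<Rightarrow> 'v list \<Rightarrow> bool" where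
  "walk V E xs \<longleftrightarrow> xs \<noteq> [] \<and> set xs \<subseteq> V \<and> successively E xs"

definition gdist :: "'v set \<Rightarrow> ('v \<Rightarrow> 'v \<Rightarrow> bool) \<Rightarrow> 'v \<Rightarrow> 'v \<Rightarrow> nat" where
  "gdist V E u v = (LEAST n. \<exists>xs. walk V E xs \<and> hd xs = u \<and> last xs = v \<and> length xs = Suc n)"

definition shortest_path :: "'v set \<Rightarrow> ('v \<Rightarrow> 'v \<Rightarrow> bool) \<Rightarrow> 'v \<Rightarrow> 'v \<Rightarrow> 'v list \<Rightarrow> bool" where
  "shortest_path V E u v xs \<longleftrightarrow> walk V E xs \<and> hd xs = u \<and> last xs = v
      \<and> length xs = Suc (gdist V E u v)"

definition strongly_resolves :: "'v set \<Rightarrow> ('v \<Rightarrow> 'v \<Rightarrow> bool) \<Rightarrow> 'v \<Rightarrow> 'v \<Rightarrow> 'v \<Rightarrow> bool" where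
  "strongly_resolves V E w u v \<longleftrightarrow>
     (\<exists>xs. shortest_path V E u w xs \<and> v \<in> set xs) \<or>
     (\<exists>xs. shortest_path V E v w xs \<and> u \<in> set xs)"

definition strong_resolving_set :: "'v set \<Rightarrow> ('v \<Rightarrow> 'v \<Rightarrow> bool) \<Rightarrow> 'v set \<Rightarrow> bool" where
  "strong_resolving_set V E W \<longleftrightarrow> W \<subseteq> V \<and>
     (\<forall>u\<in>V. \<forall>v\<in>V. \<exists>w\<in>W. strongly_resolves V E w u v)"

definition sdimM :: "'v set \<Rightarrow> ('v \<Rightarrow> 'v \<Rightarrow> bool) \<Rightarrow> enat" where
  "sdimM V E = (INF W \<in> {W. strong_resolving_set V E W}. (if finite W then enat (card W) else \<infinity>))"

end

theory Submission
  imports Defs "HOL-Library.FuncSet"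
begin

text \<open>Any two vertices a, c of G(P) are joined by a walk with at most three edges: take
  neighbours x of a and y of c; either x and y are adjacent, or they have a nonzero common lower
  bound z, which is then adjacent to both a and c. A strong resolving
  set W is in particular resolving: if w strongly resolves u and v, the shortest path from u to w
  through v (or vice versa) shows that d(u,w) = d(v,w) forces u = v. Hence u is determined by its
  distance vector to W, which takes values in the finite set {0..3}^W; so a finite W forces a
  finite vertex set. Conversely every vertex set strongly resolves itself.\<close>

definition diameter_le :: "'v set \<Rightarrow> ('v \<Rightarrow> 'v \<Rightarrow> bool) \<Rightarrow> nat \<Rightarrow> bool" where
  "diameter_le V E d \<longleftrightarrow>
     (\<forall>u\<in>V. \<forall>v\<in>V. \<exists>xs. walk V E xs \<and> hd xs = u \<and> last xs = v \<and> length xs \<le> Suc d)"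

lemma gdist_le_walk:
  assumes "walk V E xs" "hd xs = u" "last xs = v" "length xs = Suc n"
  shows "gdist V E u v \<le> n"
  unfolding gdist_def using assms by (intro Least_le) blast

lemma shortest_path_exists:
  assumes "walk V E xs" "hd xs = u" "last xs = v"
  obtains ys where "shortest_path V E u v ys"
proof -
  have "length xs = Suc (length xs - 1)"
    using assms(1) by (cases xs) (auto simp: walk_def)
  hence "\<exists>n ys. walk V E ys \<and> hd ys = u \<and> last ys = v \<and> length ys = Suc n"
    using assms by blast
  hence "\<exists>ys. walk V E ys \<and> hd ys = u \<and> last ys = v \<and> length ys = Suc (gdist V E u v)"
    unfolding gdist_def by (rule LeastI_ex)
  thus thesis using that unfolding shortest_path_def by blast
qed

lemma diameter_le_gdist_le:
  assumes "diameter_le V E d" "u \<in> V" "v \<in> V"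
  shows "gdist V E u v \<le> d"
proof -
  obtain xs where xs: "walk V E xs" "hd xs = u" "last xs = v" "length xs \<le> Suc d"
    using assms unfolding diameter_le_def by blast
  hence "length xs = Suc (length xs - 1)" by (cases xs) (auto simp: walk_def)
  with xs have "gdist V E u v \<le> length xs - 1" by (metis gdist_le_walk)
  thus ?thesis using xs(4) by linarith
qed

lemma gdist_eq_0_imp_eq:
  assumes "walk V E xs" "hd xs = u" "last xs = v" "gdist V E u v = 0"
  shows "u = v"
proof -
  obtain ys where "shortest_path V E u v ys"
    using shortest_path_exists assms(1-3) .
  hence "walk V E ys" "hd ys = u" "last ys = v" "length ys = 1"
    using assms(4) unfolding shortest_path_def by auto
  thus ?thesis by (cases ys) auto
qed

lemma shortest_path_gdist_split:
  assumes "shortest_path V E u w xs" "v \<in> set xs"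
  shows "gdist V E u v + gdist V E v w \<le> gdist V E u w"
proof -
  obtain i where i: "i < length xs" "xs ! i = v" using assms(2) by (meson in_set_conv_nth)
  have xs: "walk V E xs" "hd xs = u" "last xs = w" "length xs = Suc (gdist V E u w)"
    using assms(1) unfolding shortest_path_def by auto
  let ?p = "take (Suc i) xs" and ?q = "drop i xs"
  have "successively E ?p" "successively E ?q"
    using xs(1) successively_append_iff[of E ?p "drop (Suc i) xs"]
      successively_append_iff[of E "take i xs" ?q] by (simp_all add: walk_def)
  moreover have "set ?p \<subseteq> V" "set ?q \<subseteq> V"
    using xs(1) unfolding walk_def by (meson order_trans set_take_subset set_drop_subset)+
  ultimately have walks: "walk V E ?p" "walk V E ?q" using i(1) by (auto simp: walk_def)
  have "hd ?p = u" using xs(2) i(1) by (cases xs) auto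
  moreover have "last ?p = v" using i by (simp add: take_Suc_conv_app_nth)
  ultimately have "gdist V E u v \<le> i" using gdist_le_walk[OF walks(1)] i(1) by simp
  moreover have "gdist V E v w \<le> length xs - Suc i"
    using gdist_le_walk[OF walks(2)] i xs(3) by (simp add: hd_drop_conv_nth)
  ultimately show ?thesis using xs(4) i(1) by linarith
qed

lemma strongly_resolves_gdist_eq_imp_eq:
  assumes "diameter_le V E d" "u \<in> V" "v \<in> V"
    and "strongly_resolves V E w u v" and "gdist V E u w = gdist V E v w"
  shows "u = v"
  using assms(4) unfolding strongly_resolves_def
proof
  assume "\<exists>xs. shortest_path V E u w xs \<and> v \<in> set xs"
  hence "gdist V E u v = 0" using shortest_path_gdist_split assms(5) by fastforce
  moreover obtain xs where "walk V E xs" "hd xs = u" "last xs = v"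
    using assms(1-3) unfolding diameter_le_def by blast
  ultimately show "u = v" using gdist_eq_0_imp_eq by metis
next
  assume "\<exists>xs. shortest_path V E v w xs \<and> u \<in> set xs"
  hence "gdist V E v u = 0" using shortest_path_gdist_split assms(5) by fastforce
  moreover obtain xs where "walk V E xs" "hd xs = v" "last xs = u"
    using assms(1-3) unfolding diameter_le_def by blast
  ultimately show "u = v" using gdist_eq_0_imp_eq by metis
qed

lemma strong_resolving_set_vertices:
  assumes "diameter_le V E d"
  shows "strong_resolving_set V E V"
  unfolding strong_resolving_set_def
proof (intro conjI ballI)
  fix u v assume "u \<in> V" "v \<in> V"
  then obtain xs where "walk V E xs" "hd xs = u" "last xs = v"
    using assms unfolding diameter_le_def by blast
  then obtain ys where ys: "shortest_path V E u v ys" by (rule shortest_path_exists)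
  hence "v \<in> set ys" unfolding shortest_path_def walk_def by (metis last_in_set)
  thus "\<exists>w\<in>V. strongly_resolves V E w u v"
    using ys \<open>v \<in> V\<close> unfolding strongly_resolves_def by blast
qed simp

lemma finite_vertices_if_finite_strong_resolving_set:
  assumes "diameter_le V E d" "strong_resolving_set V E W" "finite W"
  shows "finite V"
proof -
  have WV: "W \<subseteq> V" using assms(2) unfolding strong_resolving_set_def by blast
  define distvec where "distvec u = restrict (\<lambda>w. gdist V E u w) W" for u
  have "distvec ` V \<subseteq> PiE W (\<lambda>_. {0..d})"
  proof (intro image_subsetI PiE_I)
    fix u w assume "u \<in> V" "w \<in> W"
    thus "distvec u w \<in> {0..d}"
      using diameter_le_gdist_le[OF assms(1)] WV by (auto simp: distvec_def)
  qed (simp add: distvec_def)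
  hence "finite (distvec ` V)" by (rule finite_subset) (intro finite_PiE assms(3); simp)
  moreover have "inj_on distvec V"
  proof
    fix u v assume uv: "u \<in> V" "v \<in> V" "distvec u = distvec v"
    obtain w where w: "w \<in> W" and resolves: "strongly_resolves V E w u v"
      using assms(2) uv unfolding strong_resolving_set_def by blast
    have "gdist V E u w = gdist V E v w"
      using uv(3) w unfolding distvec_def by (metis restrict_apply')
    with resolves show "u = v" by (rule strongly_resolves_gdist_eq_imp_eq[OF assms(1) uv(1,2)])
  qed
  ultimately show ?thesis using finite_imageD by blast
qed

lemma sdimM_eq_infinity_iff:
  "sdimM V E = \<infinity> \<longleftrightarrow> (\<forall>W. strong_resolving_set V E W \<longrightarrow> \<not> finite W)"
  unfolding sdimM_def top_enat_def[symmetric] INF_top_conv by (auto simp: top_enat_def)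

lemma sdimM_ne_infinity_iff_finite:
  assumes "diameter_le V E d"
  shows "sdimM V E \<noteq> \<infinity> \<longleftrightarrow> finite V"
proof
  assume "sdimM V E \<noteq> \<infinity>"
  then obtain W where "strong_resolving_set V E W" "finite W"
    by (meson sdimM_eq_infinity_iff)
  thus "finite V" by (rule finite_vertices_if_finite_strong_resolving_set[OF assms])
next
  assume "finite V"
  thus "sdimM V E \<noteq> \<infinity>"
    using sdimM_eq_infinity_iff strong_resolving_set_vertices[OF assms] by blast
qed

lemma zadj_iff:
  fixes a b :: "'a::order_bot"
  shows "zadj a b \<longleftrightarrow> a \<noteq> bot \<and> b \<noteq> bot \<and> lowerset {a, b} = {bot}"
proof
  assume "a \<noteq> bot \<and> b \<noteq> bot \<and> lowerset {a, b} = {bot}"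
  moreover from this have "a \<noteq> b" by (auto simp: lowerset_def)
  moreover from calculation have "lowerset {b, a} = {bot}" by (simp add: insert_commute)
  ultimately show "zadj a b" unfolding zadj_def Zstar_def by blast
qed (auto simp: zadj_def Zstar_def)

lemma zadj_sym: "zadj a b \<Longrightarrow> zadj b a"
  unfolding zadj_def by (auto simp: insert_commute)

lemma Zstar_ex_zadj:
  fixes a :: "'a::order_bot"
  assumes "a \<in> Zstar"
  obtains x where "zadj a x"
  using assms unfolding Zstar_def zadj_iff by blast

lemma lowerset_eq_bot_mono:
  fixes a x z :: "'a::order_bot"
  assumes "lowerset {a, x} = {bot}" "z \<le> x"
  shows "lowerset {a, z} = {bot}"
  using assms order_trans by (fastforce simp: lowerset_def)

lemma walk_Cons_iff:
  assumes "\<And>u v. E u v \<Longrightarrow> u \<in> V \<and> v \<in> V"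
  shows "walk V E (u # us) \<longleftrightarrow> u \<in> V \<and> successively E (u # us)"
  using assms by (induction us arbitrary: u) (auto simp: walk_def)

lemma Zstar_diameter_le_3: "diameter_le (Zstar :: 'a::order_bot set) zadj 3"
  unfolding diameter_le_def
proof (intro ballI)
  fix a c :: 'a assume a: "a \<in> Zstar" and c: "c \<in> Zstar"
  have walk_iff: "walk Zstar zadj (u # us) \<longleftrightarrow> u \<in> Zstar \<and> successively zadj (u # us)"
    for u :: 'a and us
    by (rule walk_Cons_iff) (simp add: zadj_def)
  obtain x where x: "zadj a x" using Zstar_ex_zadj[OF a] .
  obtain y where y: "zadj y c" by (meson Zstar_ex_zadj[OF c] zadj_sym)
  show "\<exists>xs. walk Zstar zadj xs \<and> hd xs = a \<and> last xs = c \<and> length xs \<le> Suc 3"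
  proof (cases "lowerset {x, y} = {bot}")
    case True
    hence "zadj x y" using x y by (simp add: zadj_iff)
    thus ?thesis using a x y by (intro exI[of _ "[a, x, y, c]"]) (simp add: walk_iff)
  next
    case False
    then obtain z where z: "z \<noteq> bot" "z \<le> x" "z \<le> y"
      unfolding lowerset_def by auto
    have "zadj a z" using x z lowerset_eq_bot_mono[of a x z] by (simp add: zadj_iff)
    moreover have "zadj c z"
      using zadj_sym[OF y] z lowerset_eq_bot_mono[of c y z] by (simp add: zadj_iff)
    ultimately show ?thesis using a
      by (intro exI[of _ "[a, z, c]"]) (simp add: walk_iff zadj_sym)
  qed
qed

theorem mainTheorem2:
  shows "sdimM (Zstar :: 'a::order_bot set) zadj \<noteq> \<infinity> \<longleftrightarrow> finite (Zstar :: 'a set)"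
  using sdimM_ne_infinity_iff_finite[OF Zstar_diameter_le_3] .

end
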